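(* Consider the following maps $\mathbf f_c:\mathbb{R}^2\to\mathbb{R}^2$ (with real parameter $c$ where present), together with the integer $n$: fold: $\mathbf f(x_1,x_2)=(x_1,\,x_2^2)$, $n=2$; cusp: $\mathbf f(x_1,x_2)=(x_1,\,x_1x_2+x_2^3)$, $n=3$; swallowtail: $\mathbf f_c(x_1,x_2)=(x_1x_2+cx_1^2+x_1^4,\,x_2)$, $n=4$; elliptic umbilic: $\mathbf f_c(x_1,x_2)=(3x_2^2-3x_1^2-2cx_1,\,6x_1x_2-2cx_2)$, $n=4$; hyperbolic umbilic: $\mathbf f_c(x_1,x_2)=(-3x_1^2-cx_2,\,-3x_2^2-cx_1)$, $n=4$. For each of these, if $\mathbf s\in\mathbb{R}^2$ has exactly $n$ preimages $\mathbf x_1,\dots,\mathbf x_n$ under $\mathbf f_c$ and $\det[\mathrm{Jac}\,\mathbf f_c](\mathbf x_i)\neq0$ for each $i$, then $\sum_{i=1}^n\mathfrak M_i=0$, where $\mathfrak M_i=1/\det[\mathrm{Jac}\,\mathbf f_c](\mathbf x_i)$.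
   Context: These maps are the universal local forms of generic maps between planes (induced by Lagrangian generating families) near caustics of codimension at most 3. $\mathfrak M_i$ is the signed magnification of the lensed image $\mathbf x_i$; equivalently, $\mathfrak M_i$ is the reciprocal of the Gaussian curvature of the graph of the generating function at the corresponding critical point. The set of $\mathbf s$ with exactly $n$ nondegenerate preimages is the $n$-image region. *)

theory Defs
  imports "HOL-Analysis.Analysis"
begin

definition jac_det :: "(real \<times> real \<Rightarrow> real \<times> real) \<Rightarrow> real \<times> real \<Rightarrow> real" where
  "jac_det f x = (let D = frechet_derivative f (at x) in
      fst (D (1,0)) * snd (D (0,1)) - fst (D (0,1)) * snd (D (1,0)))"

datatype caustic = Fold | Cusp | Swallowtail | EllipticUmbilic | HyperbolicUmbilic

fun lens_map :: "caustic \<Rightarrow> real \<Rightarrow> real \<times> real \<Rightarrow> real \<times> real" where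
  "lens_map Fold c (x1, x2) = (x1, x2^2)"
| "lens_map Cusp c (x1, x2) = (x1, x1*x2 + x2^3)"
| "lens_map Swallowtail c (x1, x2) = (x1*x2 + c*x1^2 + x1^4, x2)"
| "lens_map EllipticUmbilic c (x1, x2) = (3*x2^2 - 3*x1^2 - 2*c*x1, 6*x1*x2 - 2*c*x2)"
| "lens_map HyperbolicUmbilic c (x1, x2) = (-3*x1^2 - c*x2, -3*x2^2 - c*x1)"

fun image_count :: "caustic \<Rightarrow> nat" where
  "image_count Fold = 2"
| "image_count Cusp = 3"
| "image_count Swallowtail = 4"
| "image_count EllipticUmbilic = 4"
| "image_count HyperbolicUmbilic = 4"

end

theory Submission
  imports Defs "HOL-Computational_Algebra.Polynomial"
begin

(* The magnification sum over the n preimages vanishes because of one algebraic fact: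
   if P is a polynomial of degree n with n distinct roots R and deg g <= n - 2, then
   sum_{r in R} g(r) / P'(r) = 0.  We derive it from Lagrange interpolation: writing g in
   the Lagrange basis of R and comparing coefficients of x^(n-1) shows that the divided
   difference sum_r g(r) / prod_{s <> r} (r - s) is zero, and P'(r) = lc(P) prod_{s <> r} (r - s).

   For each caustic (except two degenerate situations) a coordinate projection is injective
   on the fibre f_c^{-1}(s), maps it onto the roots of an explicit polynomial P, and turns
   1/det Jac into g/P' with g of degree at most deg P - 2; so the sum vanishes.  The two
   remaining situations are handled separately: the hyperbolic umbilic with c = 0 has the
   symmetry x1 -> -x1 which negates the Jacobian, and the elliptic umbilic with s2 = 0 has
   a fibre made of two explicit pairs of points whose magnifications cancel. *)

text \<open>The divided difference of f on the node set S: the leading coefficient of the polynomial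
  interpolating f on S.\<close>
definition divided_difference :: "'a::field set \<Rightarrow> ('a \<Rightarrow> 'a) \<Rightarrow> 'a" where
  "divided_difference S f = (\<Sum>r\<in>S. f r / (\<Prod>s\<in>S - {r}. r - s))"

definition node_poly :: "'a::comm_ring_1 set \<Rightarrow> 'a poly" where
  "node_poly S = (\<Prod>s\<in>S. [:- s, 1:])"

lemma poly_node_poly: "poly (node_poly S) t = (\<Prod>s\<in>S. t - s)"
  by (simp add: node_poly_def poly_prod)

lemma degree_node_poly:
  fixes S :: "'a::idom set"
  shows "degree (node_poly S) = card S"
  by (simp add: node_poly_def degree_prod_eq_sum_degree)

lemma lead_coeff_node_poly: "lead_coeff (node_poly S) = (1::'a::idom)"
  by (simp add: node_poly_def lead_coeff_prod)

text \<open>Lagrange interpolation: a polynomial of degree below card S is determined by its values on S,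
  so it equals its Lagrange interpolant.\<close>
lemma lagrange_interpolation:
  fixes g :: "'a::field poly"
  assumes "finite S" and "degree g < card S"
  shows "g = (\<Sum>r\<in>S. smult (poly g r / (\<Prod>s\<in>S - {r}. r - s)) (node_poly (S - {r})))"
    (is "g = ?L")
proof (rule poly_eqI_degree)
  fix t assume t: "t \<in> S"
  have "poly ?L t = (\<Sum>r\<in>S. poly g r / (\<Prod>s\<in>S - {r}. r - s) * (\<Prod>s\<in>S - {r}. t - s))"
    by (simp add: poly_sum poly_node_poly)
  also have "\<dots> = poly g t / (\<Prod>s\<in>S - {t}. t - s) * (\<Prod>s\<in>S - {t}. t - s)"
    using assms(1) t by (subst sum.remove[of S t]) (auto intro!: sum.neutral)
  also have "\<dots> = poly g t"
    using assms(1) by simp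
  finally show "poly g t = poly ?L t" ..
next
  have "degree ?L \<le> card S - 1"
    using assms(1) by (intro degree_sum_le) (auto intro: order.trans[OF degree_smult_le] simp: degree_node_poly)
  then show "degree ?L < card S"
    using assms(2) by linarith
qed (use assms in auto)

text \<open>Comparing the coefficients of X^(card S - 1) in the interpolation formula: the divided
  difference of a polynomial of degree at most card S - 2 vanishes.\<close>
lemma divided_difference_poly_eq_0:
  fixes g :: "'a::field poly"
  assumes "finite S" and "degree g + 2 \<le> card S"
  shows "divided_difference S (poly g) = 0"
proof -
  let ?n = "card S - 1"
  have lead: "coeff (node_poly (S - {r})) ?n = 1" if "r \<in> S" for r
    using assms(1) that lead_coeff_node_poly[of "S - {r}"] by (simp add: degree_node_poly)
  have "0 = coeff g ?n"
    using assms(2) by (simp add: coeff_eq_0)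
  also have "\<dots> = (\<Sum>r\<in>S. poly g r / (\<Prod>s\<in>S - {r}. r - s) * coeff (node_poly (S - {r})) ?n)"
    by (subst lagrange_interpolation[OF assms(1)]) (use assms(2) in \<open>auto simp: coeff_sum\<close>)
  also have "\<dots> = divided_difference S (poly g)"
    unfolding divided_difference_def by (intro sum.cong refl) (simp only: lead mult_1_right)
  finally show ?thesis ..
qed

text \<open>At a node, the derivative of the node polynomial is the product of the differences to the
  other nodes (product rule; all other terms contain a vanishing factor).\<close>
lemma poly_pderiv_node_poly:
  fixes R :: "'a::idom set"
  assumes "finite R" and "r \<in> R"
  shows "poly (pderiv (node_poly R)) r = (\<Prod>s\<in>R - {r}. r - s)"
proof -
  have "poly (pderiv (node_poly R)) r = (\<Sum>a\<in>R. \<Prod>s\<in>R - {a}. r - s)"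
    by (simp add: node_poly_def pderiv_prod poly_sum poly_prod pderiv_pCons)
  also have "\<dots> = (\<Prod>s\<in>R - {r}. r - s)"
    using assms by (subst sum.remove[of R r]) (auto intro!: sum.neutral)
  finally show ?thesis .
qed

lemma node_poly_factorization:
  fixes P :: "'a::idom poly"
  assumes "finite R" and "card R = degree P" and "\<forall>r\<in>R. poly P r = 0"
  shows "P = smult (lead_coeff P) (node_poly R)"
proof (rule poly_eqI_degree_lead_coeff[where n = "degree P" and A = R])
  show "coeff P (degree P) = coeff (smult (lead_coeff P) (node_poly R)) (degree P)"
    using lead_coeff_node_poly[of R] by (simp add: assms(2)[symmetric] degree_node_poly)
  show "poly P z = poly (smult (lead_coeff P) (node_poly R)) z" if "z \<in> R" for z
    using assms(1,3) that by (auto simp: poly_node_poly)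
qed (use assms(2) in \<open>auto simp: degree_node_poly\<close>)

lemma sum_roots_div_pderiv_eq_0:
  fixes P g :: "'a::field poly"
  assumes "card R = degree P" and "\<forall>r\<in>R. poly P r = 0" and "degree g + 2 \<le> degree P"
  shows "(\<Sum>r\<in>R. poly g r / poly (pderiv P) r) = 0"
proof -
  have fin: "finite R" using assms(1,3) card.infinite by fastforce
  have lc: "lead_coeff P \<noteq> 0" using assms(3) by auto
  have "(\<Sum>r\<in>R. poly g r / poly (pderiv P) r)
      = (\<Sum>r\<in>R. poly g r / (lead_coeff P * (\<Prod>s\<in>R - {r}. r - s)))"
    by (intro sum.cong refl, subst node_poly_factorization[OF fin assms(1,2)])
       (simp add: pderiv_smult poly_pderiv_node_poly fin)
  also have "\<dots> = divided_difference R (poly g) / lead_coeff P"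
    by (simp add: divided_difference_def sum_divide_distrib mult.commute)
  also have "\<dots> = 0"
    using divided_difference_poly_eq_0[OF fin] assms by simp
  finally show ?thesis .
qed

lemma sum_via_root_projection:
  fixes \<pi> :: "'b \<Rightarrow> 'a::field" and P g :: "'a poly"
  assumes "inj_on \<pi> F" and "card F = degree P" and "\<forall>x\<in>F. poly P (\<pi> x) = 0"
    and "degree g + 2 \<le> degree P"
    and "\<forall>x\<in>F. m x = poly g (\<pi> x) / poly (pderiv P) (\<pi> x)"
  shows "(\<Sum>x\<in>F. m x) = 0"
proof -
  have "(\<Sum>x\<in>F. m x) = (\<Sum>r\<in>\<pi> ` F. poly g r / poly (pderiv P) r)"
    using assms(1,5) by (simp add: sum.reindex)
  also have "\<dots> = 0"
    using assms(1-4) by (intro sum_roots_div_pderiv_eq_0) (auto simp: card_image)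
  finally show ?thesis .
qed

lemma card_le_degree_via_root_projection:
  fixes \<pi> :: "'b \<Rightarrow> 'a::idom" and p :: "'a poly"
  assumes "inj_on \<pi> A" and "\<forall>x\<in>A. poly p (\<pi> x) = 0" and "p \<noteq> 0"
  shows "card A \<le> degree p"
proof -
  have "card A = card (\<pi> ` A)" using assms(1) by (simp add: card_image)
  also have "\<dots> \<le> card {t. poly p t = 0}"
    using assms(2,3) by (intro card_mono poly_roots_finite) auto
  also have "\<dots> \<le> degree p" using assms(3) by (rule card_poly_roots_bound)
  finally show ?thesis .
qed

lemma sum_odd_involution_eq_0:
  fixes h :: "'b \<Rightarrow> 'a::linordered_ab_group_add"
  assumes "\<forall>x\<in>F. \<sigma> x \<in> F \<and> \<sigma> (\<sigma> x) = x" and "\<forall>x\<in>F. h (\<sigma> x) = - h x"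
  shows "(\<Sum>x\<in>F. h x) = 0"
proof -
  have "(\<Sum>x\<in>F. h x) = (\<Sum>x\<in>F. h (\<sigma> x))"
    using assms(1) by (intro sum.reindex_bij_witness[of _ \<sigma> \<sigma>]) auto
  also have "\<dots> = - (\<Sum>x\<in>F. h x)"
    using assms(2) by (simp add: sum_negf[symmetric])
  finally show ?thesis by simp
qed

lemma jac_det_from_derivative:
  assumes "(f has_derivative D) (at x)"
  shows "jac_det f x = fst (D (1, 0)) * snd (D (0, 1)) - fst (D (0, 1)) * snd (D (1, 0))"
  unfolding jac_det_def using frechet_derivative_at[OF assms] by (simp add: Let_def)

lemma jac_det_fold: "jac_det (lens_map Fold c) (x1, x2) = 2 * x2"
proof -
  have "lens_map Fold c = (\<lambda>x. (fst x, (snd x)^2))"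
    by (rule ext) (auto split: prod.splits)
  moreover have "((\<lambda>x. (fst x, (snd x)^2)) has_derivative (\<lambda>h. (fst h, 2 * x2 * snd h))) (at (x1, x2))"
    by (auto intro!: derivative_eq_intros)
  ultimately show ?thesis by (simp add: jac_det_from_derivative)
qed

lemma jac_det_cusp: "jac_det (lens_map Cusp c) (x1, x2) = x1 + 3 * x2^2"
proof -
  have "lens_map Cusp c = (\<lambda>x. (fst x, fst x * snd x + (snd x)^3))"
    by (rule ext) (auto split: prod.splits)
  moreover have "((\<lambda>x. (fst x, fst x * snd x + (snd x)^3)) has_derivative
      (\<lambda>h. (fst h, x2 * fst h + x1 * snd h + 3 * x2^2 * snd h))) (at (x1, x2))"
    by (auto intro!: derivative_eq_intros simp: algebra_simps)
  ultimately show ?thesis by (simp add: jac_det_from_derivative)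
qed

lemma jac_det_swallowtail:
  "jac_det (lens_map Swallowtail c) (x1, x2) = x2 + 2 * c * x1 + 4 * x1^3"
proof -
  have "lens_map Swallowtail c = (\<lambda>x. (fst x * snd x + c * (fst x)^2 + (fst x)^4, snd x))"
    by (rule ext) (auto split: prod.splits)
  moreover have "((\<lambda>x. (fst x * snd x + c * (fst x)^2 + (fst x)^4, snd x)) has_derivative
      (\<lambda>h. ((x2 + 2 * c * x1 + 4 * x1^3) * fst h + x1 * snd h, snd h))) (at (x1, x2))"
    by (auto intro!: derivative_eq_intros simp: algebra_simps power3_eq_cube)
  ultimately show ?thesis by (simp add: jac_det_from_derivative)
qed

lemma jac_det_elliptic:
  "jac_det (lens_map EllipticUmbilic c) (x1, x2) = 4 * c^2 - 36 * x1^2 - 36 * x2^2"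
proof -
  have "lens_map EllipticUmbilic c =
      (\<lambda>x. (3 * (snd x)^2 - 3 * (fst x)^2 - 2 * c * fst x, 6 * fst x * snd x - 2 * c * snd x))"
    by (rule ext) (auto split: prod.splits)
  moreover have "((\<lambda>x. (3 * (snd x)^2 - 3 * (fst x)^2 - 2 * c * fst x,
        6 * fst x * snd x - 2 * c * snd x)) has_derivative
      (\<lambda>h. ((- 6 * x1 - 2 * c) * fst h + 6 * x2 * snd h, 6 * x2 * fst h + (6 * x1 - 2 * c) * snd h)))
      (at (x1, x2))"
    by (auto intro!: derivative_eq_intros simp: algebra_simps)
  ultimately show ?thesis
    by (simp add: jac_det_from_derivative algebra_simps power2_eq_square)
qed

lemma jac_det_hyperbolic:
  "jac_det (lens_map HyperbolicUmbilic c) (x1, x2) = 36 * x1 * x2 - c^2"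
proof -
  have "lens_map HyperbolicUmbilic c = (\<lambda>x. (- 3 * (fst x)^2 - c * snd x, - 3 * (snd x)^2 - c * fst x))"
    by (rule ext) (auto split: prod.splits)
  moreover have "((\<lambda>x. (- 3 * (fst x)^2 - c * snd x, - 3 * (snd x)^2 - c * fst x)) has_derivative
      (\<lambda>h. (- 6 * x1 * fst h - c * snd h, - 6 * x2 * snd h - c * fst h))) (at (x1, x2))"
    by (auto intro!: derivative_eq_intros simp: algebra_simps)
  ultimately show ?thesis
    by (simp add: jac_det_from_derivative algebra_simps power2_eq_square)
qed

text \<open>Fold: the fibre is \<open>{(s1, t) | t^2 = s2}\<close>, and 1/J = 1/P'(x2) for P = X^2 - s2.\<close>
lemma magnification_sum_fold:
  assumes "card (lens_map Fold c -` {(s1, s2)}) = 2"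
  shows "(\<Sum>x \<in> lens_map Fold c -` {(s1, s2)}. 1 / jac_det (lens_map Fold c) x) = 0"
proof (rule sum_via_root_projection[where \<pi> = snd and P = "[:- s2, 0, 1:]" and g = 1])
  show "inj_on snd (lens_map Fold c -` {(s1, s2)})"
    by (auto intro!: inj_onI)
qed (use assms in \<open>auto simp: jac_det_fold pderiv_pCons power2_eq_square\<close>)

text \<open>Cusp: x1 = s1 and x2 is a root of P = X^3 + s1 X - s2, with J = P'(x2).\<close>
lemma magnification_sum_cusp:
  assumes "card (lens_map Cusp c -` {(s1, s2)}) = 3"
  shows "(\<Sum>x \<in> lens_map Cusp c -` {(s1, s2)}. 1 / jac_det (lens_map Cusp c) x) = 0"
proof (rule sum_via_root_projection[where \<pi> = snd and P = "[:- s2, s1, 0, 1:]" and g = 1])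
  show "inj_on snd (lens_map Cusp c -` {(s1, s2)})"
    by (auto intro!: inj_onI)
qed (use assms in \<open>auto simp: jac_det_cusp pderiv_pCons algebra_simps power2_eq_square power3_eq_cube\<close>)

text \<open>Swallowtail: x2 = s2 and x1 is a root of P = X^4 + c X^2 + s2 X - s1, with J = P'(x1).\<close>
lemma magnification_sum_swallowtail:
  assumes "card (lens_map Swallowtail c -` {(s1, s2)}) = 4"
  shows "(\<Sum>x \<in> lens_map Swallowtail c -` {(s1, s2)}. 1 / jac_det (lens_map Swallowtail c) x) = 0"
proof (rule sum_via_root_projection[where \<pi> = fst and P = "[:- s1, s2, c, 0, 1:]" and g = 1])
  show "inj_on fst (lens_map Swallowtail c -` {(s1, s2)})"
    by (auto intro!: inj_onI)
qed (use assms in \<open>auto simp: jac_det_swallowtail pderiv_pCons algebra_simps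
                                  power2_eq_square power3_eq_cube power4_eq_xxxx\<close>)

text \<open>For c = 0 the reflection x1 \<mapsto> -x1 preserves every fibre and negates
  J = 36 x1 x2.  For c \<noteq> 0 the second coordinate is x2 = -(s1 + 3 x1^2)/c, x1 is a root of
  P = 27 X^4 + 18 s1 X^2 + c^3 X + 3 s1^2 + c^2 s2, and P'(x1) = -c J.\<close>
lemma magnification_sum_hyperbolic:
  assumes "card (lens_map HyperbolicUmbilic c -` {(s1, s2)}) = 4"
    and "\<forall>x \<in> lens_map HyperbolicUmbilic c -` {(s1, s2)}. jac_det (lens_map HyperbolicUmbilic c) x \<noteq> 0"
  shows "(\<Sum>x \<in> lens_map HyperbolicUmbilic c -` {(s1, s2)}. 1 / jac_det (lens_map HyperbolicUmbilic c) x) = 0"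
proof (cases "c = 0")
  case True
  show ?thesis
    by (rule sum_odd_involution_eq_0[where \<sigma> = "\<lambda>(x1, x2). (- x1, x2)"])
       (auto simp: True jac_det_hyperbolic)
next
  case False
  let ?P = "[:3 * s1^2 + c^2 * s2, c^3, 18 * s1, 0, 27:]"
  show ?thesis
  proof (rule sum_via_root_projection[where \<pi> = fst and P = ?P and g = "[:- c:]"])
    show "inj_on fst (lens_map HyperbolicUmbilic c -` {(s1, s2)})"
      using False by (auto intro!: inj_onI)
    show "\<forall>x \<in> lens_map HyperbolicUmbilic c -` {(s1, s2)}. poly ?P (fst x) = 0"
    proof (clarify)
      fix x1 x2 assume "lens_map HyperbolicUmbilic c (x1, x2) = (s1, s2)"
      then have e: "s1 = - 3 * x1^2 - c * x2" "s2 = - 3 * x2^2 - c * x1" by auto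
      show "poly ?P (fst (x1, x2)) = 0"
        unfolding e by (simp add: algebra_simps power2_eq_square power3_eq_cube power4_eq_xxxx)
    qed
    show "\<forall>x \<in> lens_map HyperbolicUmbilic c -` {(s1, s2)}.
        1 / jac_det (lens_map HyperbolicUmbilic c) x = poly [:- c:] (fst x) / poly (pderiv ?P) (fst x)"
    proof (clarify)
      fix x1 x2 assume "lens_map HyperbolicUmbilic c (x1, x2) = (s1, s2)"
      then have e: "s1 = - 3 * x1^2 - c * x2" by auto
      have "poly (pderiv ?P) x1 = - c * (36 * x1 * x2 - c^2)"
        unfolding e by (simp add: pderiv_pCons algebra_simps power2_eq_square power3_eq_cube)
      then show "1 / jac_det (lens_map HyperbolicUmbilic c) (x1, x2)
          = poly [:- c:] (fst (x1, x2)) / poly (pderiv ?P) (fst (x1, x2))"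
        using False by (simp add: jac_det_hyperbolic)
    qed
  qed (use assms(1) in simp_all)
qed

text \<open>Elliptic umbilic with s2 \<noteq> 0: from s2 = (6 x1 - 2c) x2 the factor 6 x1 - 2c is nonzero,
  x1 is a root of P = -108 X^4 + 36 (c^2 - s1) X^2 + (24 c s1 - 8 c^3) X + 3 s2^2 - 4 c^2 s1,
  and P'(x1) = (6 x1 - 2c) J.\<close>
lemma magnification_sum_elliptic_off_axis:
  assumes "card (lens_map EllipticUmbilic c -` {(s1, s2)}) = 4" and "s2 \<noteq> 0"
  shows "(\<Sum>x \<in> lens_map EllipticUmbilic c -` {(s1, s2)}. 1 / jac_det (lens_map EllipticUmbilic c) x) = 0"
proof -
  let ?P = "[:3 * s2^2 - 4 * c^2 * s1, 24 * c * s1 - 8 * c^3, 36 * (c^2 - s1), 0, - 108:]"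
  have factor: "6 * x1 - 2 * c \<noteq> 0 \<and> x2 = s2 / (6 * x1 - 2 * c)"
    if "lens_map EllipticUmbilic c (x1, x2) = (s1, s2)" for x1 x2
  proof -
    have "s2 = (6 * x1 - 2 * c) * x2" using that by (simp add: algebra_simps)
    with assms(2) show ?thesis by (auto simp: field_simps)
  qed
  show ?thesis
  proof (rule sum_via_root_projection[where \<pi> = fst and P = ?P and g = "[:- 2 * c, 6:]"])
    show "inj_on fst (lens_map EllipticUmbilic c -` {(s1, s2)})"
      by (rule inj_onI) (metis factor prod.collapse vimage_singleton_eq)
    show "\<forall>x \<in> lens_map EllipticUmbilic c -` {(s1, s2)}. poly ?P (fst x) = 0"
    proof (clarify)
      fix x1 x2 assume "lens_map EllipticUmbilic c (x1, x2) = (s1, s2)"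
      then have e: "s1 = 3 * x2^2 - 3 * x1^2 - 2 * c * x1" "s2 = 6 * x1 * x2 - 2 * c * x2" by auto
      show "poly ?P (fst (x1, x2)) = 0"
        unfolding e by (simp add: algebra_simps power2_eq_square power3_eq_cube power4_eq_xxxx)
    qed
    show "\<forall>x \<in> lens_map EllipticUmbilic c -` {(s1, s2)}.
        1 / jac_det (lens_map EllipticUmbilic c) x
          = poly [:- 2 * c, 6:] (fst x) / poly (pderiv ?P) (fst x)"
    proof (clarify)
      fix x1 x2 assume x: "lens_map EllipticUmbilic c (x1, x2) = (s1, s2)"
      then have e: "s1 = 3 * x2^2 - 3 * x1^2 - 2 * c * x1" by auto
      have "poly (pderiv ?P) x1 = poly [:- 2 * c, 6:] x1 * (4 * c^2 - 36 * x1^2 - 36 * x2^2)"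
        unfolding e by (simp add: pderiv_pCons algebra_simps power2_eq_square power3_eq_cube)
      moreover have "poly [:- 2 * c, 6:] x1 \<noteq> 0" using factor[OF x] by simp
      ultimately show "1 / jac_det (lens_map EllipticUmbilic c) (x1, x2)
          = poly [:- 2 * c, 6:] (fst (x1, x2)) / poly (pderiv ?P) (fst (x1, x2))"
        by (simp only: jac_det_elliptic fst_conv) simp
    qed
  qed (use assms(1) in simp_all)
qed

text \<open>For the two distinct roots u, v of 3 X^2 + 2c X + s, the reciprocals of 4c^2 - 36 X^2 add up
  to 1/(6 (s + c^2)); here v = -u - 2c/3 by Vieta and s = -3u^2 - 2cu.\<close>
lemma two_root_identity:
  fixes u v c s :: real
  assumes hu: "3 * u^2 + 2 * c * u + s = 0" and hv: "3 * v^2 + 2 * c * v + s = 0" and "u \<noteq> v"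
    and "4 * c^2 - 36 * u^2 \<noteq> 0" and "4 * c^2 - 36 * v^2 \<noteq> 0" and "s + c^2 \<noteq> 0"
  shows "1 / (4 * c^2 - 36 * u^2) + 1 / (4 * c^2 - 36 * v^2) = 1 / (6 * (s + c^2))"
proof -
  have "(u - v) * (3 * (u + v) + 2 * c) = 0"
    using hu hv by (simp add: algebra_simps power2_eq_square)
  then have v_eq: "v = - u - 2 * c / 3" using assms(3) by simp
  have s_eq: "s = - 3 * u^2 - 2 * c * u" using hu by simp
  define A B D where "A = 4 * c^2 - 36 * u^2" and "B = 4 * c^2 - 36 * v^2" and "D = 6 * (s + c^2)"
  have "D * (A + B) = A * B"
    unfolding A_def B_def D_def v_eq s_eq by (simp add: algebra_simps power2_eq_square)
  moreover have "A \<noteq> 0" "B \<noteq> 0" "D \<noteq> 0"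
    using assms(4-6) by (simp_all add: A_def B_def D_def)
  ultimately have "1 / A + 1 / B = 1 / D"
    by (simp add: field_simps)
  then show ?thesis by (simp add: A_def B_def D_def)
qed

text \<open>Elliptic umbilic with s2 = 0: since 0 = (6 x1 - 2c) x2, the fibre splits into the part A
  on the axis x2 = 0 (roots of 3 X^2 + 2c X + s1) and the part B on the line x1 = c/3 (where
  3 x2^2 = s1 + c^2).  Each has at most, hence exactly, two points; J is the constant
  -12 (s1 + c^2) on B, and the two magnifications on A add up to 1/(6 (s1 + c^2)).\<close>
lemma magnification_sum_elliptic_on_axis:
  assumes card: "card (lens_map EllipticUmbilic c -` {(s1, 0)}) = 4"
    and J: "\<forall>x \<in> lens_map EllipticUmbilic c -` {(s1, 0)}. jac_det (lens_map EllipticUmbilic c) x \<noteq> 0"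
  shows "(\<Sum>x \<in> lens_map EllipticUmbilic c -` {(s1, 0)}. 1 / jac_det (lens_map EllipticUmbilic c) x) = 0"
proof -
  let ?F = "lens_map EllipticUmbilic c -` {(s1, 0)}"
  let ?J = "jac_det (lens_map EllipticUmbilic c)"
  define A where "A = {x \<in> ?F. snd x = 0}"
  define B where "B = {x \<in> ?F. snd x \<noteq> 0}"
  have fin: "finite ?F" using card by (metis card.infinite zero_neq_numeral)
  have split: "?F = A \<union> B" "A \<inter> B = {}" "finite A" "finite B"
    using fin by (auto simp: A_def B_def intro: finite_subset)
  have A_roots: "snd x = 0 \<and> 3 * (fst x)^2 + 2 * c * fst x + s1 = 0" if "x \<in> A" for x
    using that by (cases x) (auto simp: A_def)
  have B_line: "fst x = c / 3 \<and> 3 * (snd x)^2 = s1 + c^2" if "x \<in> B" for x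
  proof (cases x)
    case (Pair x1 x2)
    with that have "x2 \<noteq> 0" "6 * x1 * x2 - 2 * c * x2 = 0" "s1 = 3 * x2^2 - 3 * x1^2 - 2 * c * x1"
      by (auto simp: B_def)
    moreover from this have "x1 = c / 3" by (simp add: algebra_simps)
    ultimately show ?thesis using Pair by (simp add: power2_eq_square field_simps)
  qed
  have "card A \<le> degree [:s1, 2 * c, 3:]"
  proof (rule card_le_degree_via_root_projection[where \<pi> = fst])
    show "inj_on fst A" by (rule inj_onI) (metis A_roots prod_eq_iff)
    show "\<forall>x\<in>A. poly [:s1, 2 * c, 3:] (fst x) = 0"
      using A_roots by (auto simp: algebra_simps power2_eq_square)
  qed simp
  moreover have "card B \<le> degree [:- (s1 + c^2), 0, 3:]"
  proof (rule card_le_degree_via_root_projection[where \<pi> = snd])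
    show "inj_on snd B" by (rule inj_onI) (metis B_line prod_eq_iff)
    show "\<forall>x\<in>B. poly [:- (s1 + c^2), 0, 3:] (snd x) = 0"
      using B_line by (auto simp: algebra_simps power2_eq_square)
  qed simp
  moreover have "card A + card B = 4"
    using split card by (simp add: card_Un_disjoint)
  ultimately have "card A = 2" "card B = 2" by simp_all
  then obtain a a' b b' where A: "A = {a, a'}" "a \<noteq> a'" and B: "B = {b, b'}" "b \<noteq> b'"
    by (auto simp: card_2_iff)
  have J_A: "?J x = 4 * c^2 - 36 * (fst x)^2" if "x \<in> A" for x
    using A_roots[OF that] by (cases x) (simp add: jac_det_elliptic)
  have J_B: "?J x = - 12 * (s1 + c^2)" if "x \<in> B" for x
  proof (cases x)
    case (Pair x1 x2)
    with B_line[OF that] have x1: "x1 = c / 3" and x2: "3 * x2^2 = s1 + c^2" by auto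
    have "?J x = 4 * c^2 - 36 * (c / 3)^2 - 12 * (3 * x2^2)"
      unfolding Pair x1 jac_det_elliptic by simp
    also have "\<dots> = - 12 * (s1 + c^2)"
      unfolding x2 by (simp add: power2_eq_square algebra_simps)
    finally show ?thesis .
  qed
  have J_nonzero: "?J x \<noteq> 0" if "x \<in> A \<union> B" for x
    using J split that by blast
  have mem: "a \<in> A" "a' \<in> A" "b \<in> B" "b' \<in> B"
    using A B by simp_all
  have "s1 + c^2 \<noteq> 0"
    using J_nonzero[of b] J_B[OF mem(3)] mem(3) by auto
  have "fst a \<noteq> fst a'"
    using A(2) A_roots[OF mem(1)] A_roots[OF mem(2)] by (metis prod_eq_iff)
  then have "1 / (4 * c^2 - 36 * (fst a)^2) + 1 / (4 * c^2 - 36 * (fst a')^2) = 1 / (6 * (s1 + c^2))"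
    using two_root_identity A_roots[OF mem(1)] A_roots[OF mem(2)] J_nonzero mem(1,2)
      J_A[OF mem(1)] J_A[OF mem(2)] \<open>s1 + c^2 \<noteq> 0\<close> by (metis UnI1)
  then have "(\<Sum>x\<in>A. 1 / ?J x) = 1 / (6 * (s1 + c^2))"
    using A J_A[OF mem(1)] J_A[OF mem(2)] by simp
  moreover have "(\<Sum>x\<in>B. 1 / ?J x) = 1 / ?J b + 1 / ?J b'"
    using B by simp
  moreover have "1 / ?J b + 1 / ?J b' = - 1 / (6 * (s1 + c^2))"
    unfolding J_B[OF mem(3)] J_B[OF mem(4)] by (simp add: divide_simps)
  ultimately show ?thesis
    unfolding split(1) by (simp add: sum.union_disjoint[OF split(3,4,2)])
qed

theorem theorem8p2:
  fixes k :: caustic and c :: real and s :: "real \<times> real"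
  assumes "finite (lens_map k c -` {s})"
    and "card (lens_map k c -` {s}) = image_count k"
    and "\<forall>x \<in> lens_map k c -` {s}. jac_det (lens_map k c) x \<noteq> 0"
  shows "(\<Sum>x \<in> lens_map k c -` {s}. 1 / jac_det (lens_map k c) x) = 0"
proof -
  obtain s1 s2 where s: "s = (s1, s2)" by fastforce
  show ?thesis
  proof (cases k)
    case EllipticUmbilic
    then show ?thesis
      using assms(2,3) magnification_sum_elliptic_off_axis[of c s1 s2]
        magnification_sum_elliptic_on_axis[of c s1] unfolding s by (cases "s2 = 0") auto
  qed (use assms(2,3) magnification_sum_fold magnification_sum_cusp magnification_sum_swallowtail
         magnification_sum_hyperbolic in \<open>auto simp: s\<close>)
qed

end
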